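(* For all $m,n\ge1$ with $n\ge\frac87\|[\Gamma]_{\underline m}^{-1}\|$ we have $\{8\sqrt m\,\|[\Xi]_{\underline m}\|\le1\}\subset\{[\widehat\Gamma]_{\underline m}\text{ is non-singular and }\|[\widehat\Gamma]_{\underline m}^{-1}\|\le n\}$.
   Context: $\mathbb H$ is a separable Hilbert space with orthonormal basis $\{\psi_j\}$; $[h]_{\underline m}=(\langle h,\psi_j\rangle)_{j\le m}$, $[T]_{\underline m}=(\langle\psi_j,T\psi_k\rangle)_{1\le j,k\le m}$; matrix norms are spectral norms; $[\mathrm I]_{\underline m}$ is the identity. $\Gamma$ is a strictly positive covariance operator of a centered $\mathbb H$-valued random element $X$ (so $[\Gamma]_{\underline m}$ is positive definite), $X_1,\dots,X_n$ are i.i.d. copies, $[\widehat\Gamma]_{\underline m}=n^{-1}\sum_i[X_i]_{\underline m}[X_i]_{\underline m}^t$, and $[\Xi]_{\underline m}:=[\Gamma]_{\underline m}^{-1/2}[\widehat\Gamma]_{\underline m}[\Gamma]_{\underline m}^{-1/2}-[\mathrm I]_{\underline m}$. *)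

theory Defs
  imports "HOL-Analysis.Analysis" "Jordan_Normal_Form.Matrix"
begin

definition vnorm :: "real vec \<Rightarrow> real" where
  "vnorm x = sqrt (x \<bullet> x)"

definition spec_norm :: "real mat \<Rightarrow> real" where
  "spec_norm A = Sup {vnorm (A *\<^sub>v x) | x. x \<in> carrier_vec (dim_col A) \<and> vnorm x \<le> 1}"

definition sym_mat :: "real mat \<Rightarrow> bool" where
  "sym_mat A \<longleftrightarrow> A\<^sup>T = A"

definition posdef_mat :: "real mat \<Rightarrow> bool" where
  "posdef_mat A \<longleftrightarrow> (\<forall>x \<in> carrier_vec (dim_col A). x \<noteq> 0\<^sub>v (dim_col A) \<longrightarrow> x \<bullet> (A *\<^sub>v x) > 0)"

text \<open>Inverse of a square matrix (meaningful when it is invertible).\<close>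
definition mat_inv :: "real mat \<Rightarrow> real mat" where
  "mat_inv A = (THE B. B \<in> carrier_mat (dim_row A) (dim_row A) \<and> A * B = 1\<^sub>m (dim_row A))"

text \<open>A^(-1/2): the symmetric positive definite square root of the inverse of a
  (symmetric positive definite) matrix A.\<close>
definition mat_inv_sqrt :: "real mat \<Rightarrow> real mat" where
  "mat_inv_sqrt A = (THE S. S \<in> carrier_mat (dim_row A) (dim_row A) \<and> sym_mat S \<and> posdef_mat S
       \<and> S * S * A = 1\<^sub>m (dim_row A))"

text \<open>Coefficient vector [h]_m = (<h,psi_j>)_{1<=j<=m}; JNF indices are 0-based,
  so entry j corresponds to psi (j+1).\<close>
definition coef_vec :: "(nat \<Rightarrow> 'h::real_inner) \<Rightarrow> nat \<Rightarrow> 'h \<Rightarrow> real vec" where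
  "coef_vec \<psi> m h = vec m (\<lambda>j. inner h (\<psi> (Suc j)))"

definition coef_mat :: "(nat \<Rightarrow> 'h::real_inner) \<Rightarrow> nat \<Rightarrow> ('h \<Rightarrow> 'h) \<Rightarrow> real mat" where
  "coef_mat \<psi> m T = mat m m (\<lambda>(j,k). inner (\<psi> (Suc j)) (T (\<psi> (Suc k))))"

definition emp_cov :: "(nat \<Rightarrow> 'h::real_inner) \<Rightarrow> nat \<Rightarrow> nat \<Rightarrow> (nat \<Rightarrow> 'h) \<Rightarrow> real mat" where
  "emp_cov \<psi> m n X = mat m m (\<lambda>(j,k). (1 / real n) *
      (\<Sum>i\<in>{1..n}. (coef_vec \<psi> m (X i)) $ j * (coef_vec \<psi> m (X i)) $ k))"

definition Xi_mat :: "(nat \<Rightarrow> 'h::real_inner) \<Rightarrow> nat \<Rightarrow> ('h \<Rightarrow> 'h) \<Rightarrow> nat \<Rightarrow> (nat \<Rightarrow> 'h) \<Rightarrow> real mat" where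
  "Xi_mat \<psi> m \<Gamma> n X = mat_inv_sqrt (coef_mat \<psi> m \<Gamma>) * emp_cov \<psi> m n X * mat_inv_sqrt (coef_mat \<psi> m \<Gamma>)
      - 1\<^sub>m m"

end

theory Submission
  imports Defs "Jordan_Normal_Form.Schur_Decomposition"
begin

(*
  Let S = [Gamma]_m^(-1/2) and M = S [Gamma_hat]_m S.  On the event, ||M - I|| <= 1/(8 sqrt m) <= 1/8,
  so ||M x|| >= 7/8 ||x||: M is invertible with ||M^-1|| <= 8/7.  Since S is invertible,
  [Gamma_hat]_m^-1 = S M^-1 S, and for symmetric S we have ||S||^2 <= ||S^2|| = ||[Gamma]_m^-1||;
  hence ||[Gamma_hat]_m^-1|| <= 8/7 ||[Gamma]_m^-1|| <= n.

  Most of the work goes into showing that S is well defined, i.e. that a symmetric positive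
  definite matrix G has exactly one symmetric positive definite S with S^2 G = I.  Existence comes
  from the spectral theorem for real symmetric matrices (an eigenvalue of the complexification is
  real; an orthonormal completion of an eigenvector deflates the matrix).  Uniqueness is a trace
  argument: for two such roots, E = S - T satisfies S E + E T = 0, so
  tr(E S E) + tr(E T E) = tr(E (S E + E T)) = 0 with both traces nonnegative, forcing E = 0.
*)

section \<open>Norms and inverses\<close>

lemma mult_mat_vec_zero: "A \<in> carrier_mat nr nc \<Longrightarrow> A *\<^sub>v 0\<^sub>v nc = 0\<^sub>v nr"
  by (intro eq_vecI) auto

lemma scalar_prod_self_nonneg: "(x :: real vec) \<bullet> x \<ge> 0"
  by (simp add: scalar_prod_def sum_nonneg)

lemma vnorm_nonneg: "vnorm x \<ge> 0"
  unfolding vnorm_def using scalar_prod_self_nonneg[of x] by simp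

lemma vnorm_power2: "vnorm x ^ 2 = x \<bullet> x"
  unfolding vnorm_def using scalar_prod_self_nonneg[of x] by simp

lemma vnorm_zero_vec [simp]: "vnorm (0\<^sub>v n) = 0"
  by (simp add: vnorm_def)

lemma vnorm_eq_L2_set: "x \<in> carrier_vec n \<Longrightarrow> vnorm x = L2_set (\<lambda>i. x $ i) {..<n}"
  unfolding vnorm_def L2_set_def scalar_prod_def by (simp add: power2_eq_square atLeast0LessThan)

lemma vnorm_eq_0_iff:
  assumes "x \<in> carrier_vec n"
  shows "vnorm x = 0 \<longleftrightarrow> x = 0\<^sub>v n"
  using assms by (auto simp: vnorm_eq_L2_set L2_set_eq_0_iff intro!: eq_vecI)

lemma vnorm_smult: "vnorm (c \<cdot>\<^sub>v x) = \<bar>c\<bar> * vnorm x"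
proof -
  have "(c \<cdot>\<^sub>v x) \<bullet> (c \<cdot>\<^sub>v x) = c\<^sup>2 * (x \<bullet> x)"
    by (simp add: scalar_prod_def sum_distrib_left power2_eq_square mult_ac)
  then show ?thesis
    unfolding vnorm_def by (simp add: real_sqrt_mult)
qed

lemma abs_scalar_prod_le_vnorm:
  assumes x: "x \<in> carrier_vec n" and y: "y \<in> carrier_vec n"
  shows "\<bar>x \<bullet> y\<bar> \<le> vnorm x * vnorm y"
proof -
  have "\<bar>x \<bullet> y\<bar> = \<bar>\<Sum>i<n. x $ i * y $ i\<bar>"
    using y by (simp add: scalar_prod_def atLeast0LessThan)
  also have "\<dots> \<le> (\<Sum>i<n. \<bar>x $ i\<bar> * \<bar>y $ i\<bar>)"
    by (rule order_trans[OF sum_abs]) (simp add: abs_mult)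
  also have "\<dots> \<le> L2_set (\<lambda>i. x $ i) {..<n} * L2_set (\<lambda>i. y $ i) {..<n}"
    by (rule L2_set_mult_ineq)
  finally show ?thesis
    using x y by (simp add: vnorm_eq_L2_set)
qed

lemma vnorm_add_ge_diff:
  assumes x: "x \<in> carrier_vec n" and y: "y \<in> carrier_vec n"
  shows "vnorm x - vnorm y \<le> vnorm (x + y)"
proof -
  have "(x + y) \<bullet> (x + y) = x \<bullet> x + 2 * (x \<bullet> y) + y \<bullet> y"
    using x y by (simp add: add_scalar_prod_distrib[of _ n] scalar_prod_add_distrib[of _ n]
        comm_scalar_prod[of y n x])
  moreover have "- (vnorm x * vnorm y) \<le> x \<bullet> y"
    using abs_scalar_prod_le_vnorm[OF x y] by linarith
  ultimately have "(vnorm x - vnorm y)\<^sup>2 \<le> (vnorm (x + y))\<^sup>2"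
    unfolding vnorm_power2[symmetric] by (simp add: power2_diff)
  then have "\<bar>vnorm x - vnorm y\<bar> \<le> vnorm (x + y)"
    using vnorm_nonneg[of "x + y"] by (metis abs_le_square_iff abs_of_nonneg)
  then show ?thesis
    by linarith
qed

lemma vnorm_mult_mat_vec_le_row_sum:
  assumes A: "A \<in> carrier_mat nr nc" and x: "x \<in> carrier_vec nc"
  shows "vnorm (A *\<^sub>v x) \<le> (\<Sum>i<nr. vnorm (row A i)) * vnorm x"
proof -
  have "vnorm (A *\<^sub>v x) = L2_set (\<lambda>i. (A *\<^sub>v x) $ i) {..<nr}"
    using A x by (intro vnorm_eq_L2_set) auto
  also have "\<dots> \<le> (\<Sum>i<nr. \<bar>(A *\<^sub>v x) $ i\<bar>)"
    by (rule L2_set_le_sum_abs)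
  also have "\<dots> = (\<Sum>i<nr. \<bar>row A i \<bullet> x\<bar>)"
    using A by simp
  also have "\<dots> \<le> (\<Sum>i<nr. vnorm (row A i) * vnorm x)"
    using A x by (intro sum_mono abs_scalar_prod_le_vnorm[of _ nc]) auto
  finally show ?thesis
    by (simp add: sum_distrib_right)
qed

lemma bdd_above_spec_norm_set:
  "bdd_above {vnorm (A *\<^sub>v x) | x. x \<in> carrier_vec (dim_col A) \<and> vnorm x \<le> 1}"
  unfolding bdd_above_def
proof (intro exI allI ballI, clarify)
  fix x assume x: "x \<in> carrier_vec (dim_col A)" "vnorm x \<le> 1"
  have "vnorm (A *\<^sub>v x) \<le> (\<Sum>i<dim_row A. vnorm (row A i)) * vnorm x"
    using x by (intro vnorm_mult_mat_vec_le_row_sum) auto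
  also have "\<dots> \<le> (\<Sum>i<dim_row A. vnorm (row A i))"
    using x vnorm_nonneg by (intro mult_left_le) (auto intro: sum_nonneg)
  finally show "vnorm (A *\<^sub>v x) \<le> (\<Sum>i<dim_row A. vnorm (row A i))" .
qed

lemma spec_norm_ge:
  assumes "x \<in> carrier_vec (dim_col A)" "vnorm x \<le> 1"
  shows "vnorm (A *\<^sub>v x) \<le> spec_norm A"
  unfolding spec_norm_def using assms by (intro cSup_upper bdd_above_spec_norm_set) auto

lemma spec_norm_nonneg: "spec_norm A \<ge> 0"
  by (rule order_trans[OF vnorm_nonneg spec_norm_ge[of "0\<^sub>v (dim_col A)"]])
    simp_all

lemma vnorm_mult_mat_vec_le:
  assumes x: "x \<in> carrier_vec (dim_col A)"
  shows "vnorm (A *\<^sub>v x) \<le> spec_norm A * vnorm x"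
proof (cases "vnorm x = 0")
  case True
  then have "x = 0\<^sub>v (dim_col A)"
    using vnorm_eq_0_iff[OF x] by simp
  then show ?thesis
    using True mult_mat_vec_zero[of A "dim_row A" "dim_col A"] by simp
next
  case False
  then have pos: "vnorm x > 0"
    using vnorm_nonneg[of x] by linarith
  have "vnorm (A *\<^sub>v ((1 / vnorm x) \<cdot>\<^sub>v x)) \<le> spec_norm A"
    using x pos by (intro spec_norm_ge) (auto simp: vnorm_smult)
  moreover have "A *\<^sub>v ((1 / vnorm x) \<cdot>\<^sub>v x) = (1 / vnorm x) \<cdot>\<^sub>v (A *\<^sub>v x)"
    using x by (simp add: mult_mat_vec[of A "dim_row A" "dim_col A"])
  ultimately show ?thesis
    using pos by (simp add: vnorm_smult field_simps)
qed

lemma spec_norm_le: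
  assumes c: "c \<ge> 0"
    and bound: "\<And>x. x \<in> carrier_vec (dim_col A) \<Longrightarrow> vnorm (A *\<^sub>v x) \<le> c * vnorm x"
  shows "spec_norm A \<le> c"
  unfolding spec_norm_def
proof (rule cSup_least)
  show "{vnorm (A *\<^sub>v x) |x. x \<in> carrier_vec (dim_col A) \<and> vnorm x \<le> 1} \<noteq> {}"
    by (auto intro!: exI[of _ "0\<^sub>v (dim_col A)"] simp: vnorm_def)
next
  fix y assume "y \<in> {vnorm (A *\<^sub>v x) |x. x \<in> carrier_vec (dim_col A) \<and> vnorm x \<le> 1}"
  then obtain x where x: "x \<in> carrier_vec (dim_col A)" "vnorm x \<le> 1" and y: "y = vnorm (A *\<^sub>v x)"
    by auto
  have "y \<le> c * vnorm x"
    unfolding y by (rule bound[OF x(1)])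
  also have "\<dots> \<le> c"
    using c x(2) by (simp add: mult_left_le)
  finally show "y \<le> c" .
qed

lemma spec_norm_mult_le:
  fixes A B :: "real mat"
  assumes A: "A \<in> carrier_mat n k" and B: "B \<in> carrier_mat k l"
  shows "spec_norm (A * B) \<le> spec_norm A * spec_norm B"
proof (rule spec_norm_le)
  fix x :: "real vec" assume "x \<in> carrier_vec (dim_col (A * B))"
  then have x: "x \<in> carrier_vec l"
    using B by simp
  have "vnorm ((A * B) *\<^sub>v x) = vnorm (A *\<^sub>v (B *\<^sub>v x))"
    using A B x by simp
  also have "\<dots> \<le> spec_norm A * vnorm (B *\<^sub>v x)"
    using A B x by (intro vnorm_mult_mat_vec_le) simp
  also have "\<dots> \<le> spec_norm A * (spec_norm B * vnorm x)"
    using B x by (intro mult_left_mono vnorm_mult_mat_vec_le spec_norm_nonneg) simp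
  finally show "vnorm ((A * B) *\<^sub>v x) \<le> spec_norm A * spec_norm B * vnorm x"
    by (simp add: mult.assoc)
qed (intro mult_nonneg_nonneg spec_norm_nonneg)

lemma spec_norm_power2_le_sym:
  assumes S: "S \<in> carrier_mat n n" and sym: "sym_mat S"
  shows "(spec_norm S)\<^sup>2 \<le> spec_norm (S * S)"
proof -
  have "vnorm (S *\<^sub>v x) \<le> sqrt (spec_norm (S * S)) * vnorm x" if x: "x \<in> carrier_vec n" for x
  proof -
    have Sx: "S *\<^sub>v x \<in> carrier_vec n"
      using S x by simp
    have "(vnorm (S *\<^sub>v x))\<^sup>2 = (transpose_mat S *\<^sub>v (S *\<^sub>v x)) \<bullet> x"
      unfolding vnorm_power2 by (rule transpose_vec_mult_scalar[OF S x Sx, symmetric])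
    also have "\<dots> = ((S * S) *\<^sub>v x) \<bullet> x"
      using sym S x by (simp add: sym_mat_def)
    also have "\<dots> \<le> vnorm ((S * S) *\<^sub>v x) * vnorm x"
      using S x abs_scalar_prod_le_vnorm[of "(S * S) *\<^sub>v x" n x] by simp
    also have "\<dots> \<le> spec_norm (S * S) * vnorm x * vnorm x"
      using S x by (intro mult_right_mono vnorm_mult_mat_vec_le vnorm_nonneg) simp
    also have "\<dots> = (sqrt (spec_norm (S * S)) * vnorm x)\<^sup>2"
      by (simp add: power_mult_distrib spec_norm_nonneg power2_eq_square)
    finally have "(vnorm (S *\<^sub>v x))\<^sup>2 \<le> (sqrt (spec_norm (S * S)) * vnorm x)\<^sup>2" .
    then show ?thesis
      using vnorm_nonneg spec_norm_nonneg by (meson mult_nonneg_nonneg power2_le_imp_le real_sqrt_ge_zero)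
  qed
  then have "spec_norm S \<le> sqrt (spec_norm (S * S))"
    using S by (intro spec_norm_le) (auto simp: spec_norm_nonneg)
  then show ?thesis
    using spec_norm_nonneg[of S] spec_norm_nonneg[of "S * S"] by (metis power_mono real_sqrt_pow2)
qed

lemma spec_norm_sym_congruence_le:
  fixes S N :: "real mat"
  assumes S: "S \<in> carrier_mat n n" and sym: "sym_mat S" and N: "N \<in> carrier_mat n n"
  shows "spec_norm (S * N * S) \<le> spec_norm (S * S) * spec_norm N"
proof -
  have "spec_norm (S * N * S) \<le> spec_norm (S * N) * spec_norm S"
    using S N by (intro spec_norm_mult_le) auto
  also have "\<dots> \<le> spec_norm S * spec_norm N * spec_norm S"
    using S N by (intro mult_right_mono spec_norm_mult_le spec_norm_nonneg)
  also have "\<dots> = (spec_norm S)\<^sup>2 * spec_norm N"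
    by (simp add: power2_eq_square)
  also have "\<dots> \<le> spec_norm (S * S) * spec_norm N"
    using spec_norm_power2_le_sym[OF S sym] spec_norm_nonneg[of N] by (rule mult_right_mono)
  finally show ?thesis .
qed

lemma mat_inv_eqI:
  fixes A B :: "real mat"
  assumes A: "A \<in> carrier_mat n n" and B: "B \<in> carrier_mat n n" and AB: "A * B = 1\<^sub>m n"
  shows "mat_inv A = B"
proof -
  have BA: "B * A = 1\<^sub>m n"
    using mat_mult_left_right_inverse[OF A B AB] .
  have "(THE B. B \<in> carrier_mat n n \<and> A * B = 1\<^sub>m n) = B"
  proof (rule the_equality)
    fix C assume C: "C \<in> carrier_mat n n \<and> A * C = 1\<^sub>m n"
    have "C = (B * A) * C"
      unfolding BA using C left_mult_one_mat[of C n n] by simp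
    also have "\<dots> = B * (A * C)"
      using A B C by (simp add: assoc_mult_mat[of _ n n _ n _ n])
    finally show "C = B"
      using C B by simp
  qed (use B AB in simp)
  then show ?thesis
    unfolding mat_inv_def using A by simp
qed

lemma invertible_mat_of_right_inverse:
  fixes A B :: "real mat"
  assumes A: "A \<in> carrier_mat n n" and B: "B \<in> carrier_mat n n" and AB: "A * B = 1\<^sub>m n"
  shows "invertible_mat A"
  unfolding invertible_mat_def inverts_mat_def
  using A B AB mat_mult_left_right_inverse[OF A B AB] by (intro conjI exI[of _ B]) auto

lemma mat_inv_right_inverse:
  fixes A :: "real mat"
  assumes A: "A \<in> carrier_mat n n" and inv: "invertible_mat A"
  shows "mat_inv A \<in> carrier_mat n n \<and> A * mat_inv A = 1\<^sub>m n"
proof -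
  obtain B where AB: "A * B = 1\<^sub>m n" and BA: "B * A = 1\<^sub>m (dim_row B)"
    using A inv unfolding invertible_mat_def inverts_mat_def by auto
  have "B \<in> carrier_mat n n"
    using arg_cong[OF AB, of dim_col] arg_cong[OF BA, of dim_col] A by auto
  then show ?thesis
    using mat_inv_eqI[OF A _ AB] AB by simp
qed

lemma invertible_mat_of_vnorm_ge:
  fixes M :: "real mat"
  assumes M: "M \<in> carrier_mat n n" and c: "c > 0"
    and lower: "\<And>x. x \<in> carrier_vec n \<Longrightarrow> c * vnorm x \<le> vnorm (M *\<^sub>v x)"
  shows "invertible_mat M \<and> spec_norm (mat_inv M) \<le> 1 / c"
proof -
  have "det M \<noteq> 0"
  proof
    assume "det M = 0"
    then obtain v where v: "v \<in> carrier_vec n" "v \<noteq> 0\<^sub>v n" "M *\<^sub>v v = 0\<^sub>v n"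
      using det_0_iff_vec_prod_zero_field[OF M] by blast
    have "vnorm v > 0"
      using vnorm_eq_0_iff[OF v(1)] v(2) vnorm_nonneg[of v] by linarith
    then have "c * vnorm v > 0"
      using c by simp
    then show False
      using lower[OF v(1)] v(3) by simp
  qed
  then obtain N where N: "N \<in> carrier_mat n n" and MN: "M * N = 1\<^sub>m n"
    using det_non_zero_imp_unit[OF M, of undefined] unfolding Units_def ring_mat_def by auto
  have "spec_norm N \<le> 1 / c"
  proof (rule spec_norm_le)
    fix y :: "real vec" assume "y \<in> carrier_vec (dim_col N)"
    then have y: "y \<in> carrier_vec n"
      using N by simp
    have "M *\<^sub>v (N *\<^sub>v y) = y"
      using M N y MN by (metis assoc_mult_mat_vec one_mult_mat_vec)
    then have "c * vnorm (N *\<^sub>v y) \<le> vnorm y"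
      using lower[of "N *\<^sub>v y"] N y by simp
    then show "vnorm (N *\<^sub>v y) \<le> 1 / c * vnorm y"
      using c by (simp add: field_simps)
  qed (use c in simp)
  then show ?thesis
    using invertible_mat_of_right_inverse[OF M N MN] mat_inv_eqI[OF M N MN] by simp
qed

lemma invertible_mat_near_one:
  fixes M :: "real mat"
  assumes M: "M \<in> carrier_mat n n" and close: "spec_norm (M - 1\<^sub>m n) \<le> \<delta>" and "\<delta> < 1"
  shows "invertible_mat M \<and> spec_norm (mat_inv M) \<le> 1 / (1 - \<delta>)"
proof (rule invertible_mat_of_vnorm_ge[OF M])
  fix x :: "real vec" assume x: "x \<in> carrier_vec n"
  have E: "(M - 1\<^sub>m n) *\<^sub>v x \<in> carrier_vec n"
    using M x by (intro mult_mat_vec_carrier[of _ n n]) auto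
  have "M *\<^sub>v x = x + (M - 1\<^sub>m n) *\<^sub>v x"
    using M x by (intro eq_vecI) (auto simp: minus_mult_distrib_mat_vec)
  then have "vnorm x - vnorm ((M - 1\<^sub>m n) *\<^sub>v x) \<le> vnorm (M *\<^sub>v x)"
    using vnorm_add_ge_diff[OF x E] by simp
  moreover have "vnorm ((M - 1\<^sub>m n) *\<^sub>v x) \<le> \<delta> * vnorm x"
    using vnorm_mult_mat_vec_le[of x "M - 1\<^sub>m n"] M x close
    by (metis index_minus_mat(3) index_one_mat(3) order.trans mult_right_mono vnorm_nonneg)
  ultimately show "(1 - \<delta>) * vnorm x \<le> vnorm (M *\<^sub>v x)"
    by (simp add: algebra_simps)
qed (use \<open>\<delta> < 1\<close> in simp)

section \<open>Congruences\<close>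

lemma sym_mat_congruence:
  fixes P U :: "real mat"
  assumes U: "U \<in> carrier_mat n k" and P: "P \<in> carrier_mat k k" and sym: "sym_mat P"
  shows "sym_mat (U * P * transpose_mat U)"
proof -
  have "transpose_mat (U * P * transpose_mat U) = transpose_mat (transpose_mat U) * transpose_mat (U * P)"
    using U P by (intro transpose_mult[of _ n k]) auto
  also have "\<dots> = U * (transpose_mat P * transpose_mat U)"
    using U P by (simp add: transpose_mult[of _ n k])
  finally show ?thesis
    using sym U P unfolding sym_mat_def by (simp add: assoc_mult_mat[of _ n k _ k _ n])
qed

lemma posdef_mat_congruence:
  fixes P U :: "real mat"
  assumes U: "U \<in> carrier_mat n n" and UUt: "U * transpose_mat U = 1\<^sub>m n"
    and P: "P \<in> carrier_mat n n" and pd: "posdef_mat P"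
  shows "posdef_mat (U * P * transpose_mat U)"
  unfolding posdef_mat_def
proof (intro ballI impI)
  fix x :: "real vec"
  assume "x \<in> carrier_vec (dim_col (U * P * transpose_mat U))"
    and "x \<noteq> 0\<^sub>v (dim_col (U * P * transpose_mat U))"
  then have x: "x \<in> carrier_vec n" and x0: "x \<noteq> 0\<^sub>v n"
    using U by auto
  define y where "y = transpose_mat U *\<^sub>v x"
  have y: "y \<in> carrier_vec n"
    unfolding y_def using U x by simp
  have "U *\<^sub>v y = x"
    unfolding y_def using U x UUt by (metis assoc_mult_mat_vec one_mult_mat_vec transpose_carrier_mat)
  then have "y \<noteq> 0\<^sub>v n"
    using x0 U mult_mat_vec_zero[OF U] by auto
  have "x \<bullet> ((U * P * transpose_mat U) *\<^sub>v x) = x \<bullet> (U *\<^sub>v (P *\<^sub>v y))"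
    unfolding y_def using U P x by (simp add: assoc_mult_mat_vec[of _ n n _ n])
  also have "\<dots> = y \<bullet> (P *\<^sub>v y)"
    unfolding y_def using U P x y by (simp add: transpose_vec_mult_scalar[of U n n])
  also have "\<dots> > 0"
    using pd P y \<open>y \<noteq> 0\<^sub>v n\<close> unfolding posdef_mat_def by auto
  finally show "x \<bullet> ((U * P * transpose_mat U) *\<^sub>v x) > 0" .
qed

lemma orthogonal_mat_mult:
  fixes N U :: "real mat"
  assumes N: "N \<in> carrier_mat n n" and U: "U \<in> carrier_mat n n"
    and NtN: "transpose_mat N * N = 1\<^sub>m n" and UtU: "transpose_mat U * U = 1\<^sub>m n"
  shows "transpose_mat (N * U) * (N * U) = 1\<^sub>m n"
proof -
  have "transpose_mat (N * U) * (N * U) = transpose_mat U * (transpose_mat N * N) * U"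
    using N U by (simp add: transpose_mult[of _ n n] assoc_mult_mat[of _ n n _ n _ n])
  then show ?thesis
    using NtN UtU U by simp
qed

lemma congruence_mult_assoc:
  fixes N U D :: "real mat"
  assumes N: "N \<in> carrier_mat n n" and U: "U \<in> carrier_mat n n" and D: "D \<in> carrier_mat n n"
  shows "N * (U * D * transpose_mat U) * transpose_mat N = N * U * D * transpose_mat (N * U)"
proof -
  have Nt: "transpose_mat N \<in> carrier_mat n n" and Ut: "transpose_mat U \<in> carrier_mat n n"
    using N U by auto
  have UD: "U * D \<in> carrier_mat n n"
    using U D by simp
  have "N * (U * D * transpose_mat U) * transpose_mat N = N * (U * D * transpose_mat U * transpose_mat N)"
    by (rule assoc_mult_mat[OF N mult_carrier_mat[OF UD Ut] Nt])
  also have "\<dots> = N * (U * D * (transpose_mat U * transpose_mat N))"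
    by (simp only: assoc_mult_mat[OF UD Ut Nt])
  also have "\<dots> = N * (U * D) * (transpose_mat U * transpose_mat N)"
    by (rule assoc_mult_mat[OF N UD mult_carrier_mat[OF Ut Nt], symmetric])
  also have "\<dots> = N * U * D * transpose_mat (N * U)"
    using N U D by (simp add: transpose_mult[of _ n n] assoc_mult_mat[of _ n n _ n _ n])
  finally show ?thesis .
qed

lemma mult_orthogonal_conjugates:
  fixes U A B :: "real mat"
  assumes U: "U \<in> carrier_mat n n" and UtU: "transpose_mat U * U = 1\<^sub>m n"
    and A: "A \<in> carrier_mat n n" and B: "B \<in> carrier_mat n n"
  shows "U * A * transpose_mat U * (U * B * transpose_mat U) = U * (A * B) * transpose_mat U"
proof -
  have Ut: "transpose_mat U \<in> carrier_mat n n"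
    using U by simp
  have "U * A * transpose_mat U * (U * B * transpose_mat U)
      = U * (A * (transpose_mat U * U) * B) * transpose_mat U"
    using U Ut A B by (simp add: assoc_mult_mat[of _ n n _ n _ n])
  then show ?thesis
    unfolding UtU using A by simp
qed

lemma orthogonal_conjugate_cancel:
  fixes U A :: "real mat"
  assumes U: "U \<in> carrier_mat n n" and UtU: "transpose_mat U * U = 1\<^sub>m n"
    and A: "A \<in> carrier_mat n n"
  shows "transpose_mat U * (U * A * transpose_mat U) * U = A"
proof -
  have Ut: "transpose_mat U \<in> carrier_mat n n"
    using U by simp
  have "transpose_mat U * (U * A * transpose_mat U) * U
      = (transpose_mat U * U) * A * (transpose_mat U * U)"
    using U Ut A by (simp add: assoc_mult_mat[of _ n n _ n _ n])
  then show ?thesis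
    unfolding UtU using A by simp
qed

lemma right_inverse_of_congruence:
  fixes S T H N :: "real mat"
  assumes S: "S \<in> carrier_mat n n" and T: "T \<in> carrier_mat n n" and H: "H \<in> carrier_mat n n"
    and N: "N \<in> carrier_mat n n" and ST: "S * T = 1\<^sub>m n" and SHSN: "S * H * S * N = 1\<^sub>m n"
  shows "H * (S * N * S) = 1\<^sub>m n"
proof -
  have TS: "T * S = 1\<^sub>m n"
    using mat_mult_left_right_inverse[OF S T ST] .
  have "H = T * (S * H * S) * T"
  proof -
    have "T * (S * H * S) * T = (T * S) * H * (S * T)"
      using T S H by (simp add: assoc_mult_mat[of _ n n _ n _ n])
    then show ?thesis
      unfolding TS ST using H by simp
  qed
  then have "H * (S * N * S) = T * (S * H * S) * T * (S * N * S)"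
    by (rule arg_cong[where f = "\<lambda>X. X * (S * N * S)"])
  also have "\<dots> = T * (S * H * S) * (T * S) * N * S"
    using T S H N by (simp add: assoc_mult_mat[of _ n n _ n _ n])
  also have "\<dots> = T * (S * H * S * N) * S"
    unfolding TS using T S H N by (simp add: assoc_mult_mat[of _ n n _ n _ n])
  finally show ?thesis
    unfolding SHSN using T TS by simp
qed

section \<open>Spectral theorem for real symmetric matrices\<close>

lemma complex_eigenvalue_of_sym_mat_real:
  fixes A :: "real mat"
  assumes A: "A \<in> carrier_mat n n" and sym: "sym_mat A"
    and ev: "eigenvalue (map_mat complex_of_real A) a"
  shows "Im a = 0"
proof -
  define Ac where "Ac = map_mat complex_of_real A"
  obtain v where v: "v \<in> carrier_vec n" and v0: "v \<noteq> 0\<^sub>v n" and Av: "Ac *\<^sub>v v = a \<cdot>\<^sub>v v"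
    using ev A unfolding Ac_def[symmetric] eigenvalue_def eigenvector_def by (auto simp: Ac_def)
  define s where "s = (\<Sum>i<n. cnj (v $ i) * (Ac *\<^sub>v v) $ i)"
  define r where "r = (\<Sum>i<n. (cmod (v $ i))\<^sup>2)"
  have "s = a * complex_of_real r"
    unfolding s_def r_def Av of_real_sum using v
    by (auto simp: sum_distrib_left complex_norm_square mult.commute simp del: of_real_power
        intro!: sum.cong)
  have s: "s = (\<Sum>i<n. \<Sum>j<n. cnj (v $ i) * complex_of_real (A $$ (i, j)) * v $ j)"
    unfolding s_def using v A
    by (auto simp: Ac_def scalar_prod_def sum_distrib_left mult.assoc intro!: sum.cong)
  have Aij: "A $$ (i, j) = A $$ (j, i)" if "i < n" "j < n" for i j
    using sym A that unfolding sym_mat_def by (metis carrier_matD index_transpose_mat(1))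
  \<comment> \<open>the Hermitian form \<open>v\<^sup>* A v\<close> of a real symmetric matrix is real\<close>
  have "cnj s = (\<Sum>i<n. \<Sum>j<n. v $ i * complex_of_real (A $$ (i, j)) * cnj (v $ j))"
    unfolding s by simp
  also have "\<dots> = (\<Sum>j<n. \<Sum>i<n. v $ i * complex_of_real (A $$ (i, j)) * cnj (v $ j))"
    by (rule sum.swap)
  also have "\<dots> = s"
    unfolding s by (intro sum.cong refl) (simp add: Aij mult.commute mult.left_commute)
  finally have "cnj s = s" .
  moreover obtain i where "i < n" "v $ i \<noteq> 0"
    using v v0 by (metis carrier_vecD eq_vecI index_zero_vec(1,2))
  then have "r > 0"
    unfolding r_def by (intro sum_pos2[of _ i]) auto
  ultimately have "cnj a * complex_of_real r = a * complex_of_real r"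
    using \<open>s = a * complex_of_real r\<close> by (metis complex_cnj_complex_of_real complex_cnj_mult)
  then have "cnj a = a"
    using \<open>r > 0\<close> by simp
  then have "Im (cnj a) = Im a"
    by simp
  then show ?thesis
    by simp
qed

lemma sym_mat_has_eigenvalue:
  fixes A :: "real mat"
  assumes A: "A \<in> carrier_mat n n" and n: "n > 0" and sym: "sym_mat A"
  shows "\<exists>e. eigenvalue A e"
proof -
  define Ac where "Ac = map_mat complex_of_real A"
  have Ac: "Ac \<in> carrier_mat n n"
    using A unfolding Ac_def by auto
  obtain as where cp: "char_poly Ac = (\<Prod>a\<leftarrow>as. [:- a, 1:])" and len: "length as = n"
    using char_poly_factorized[OF Ac] by blast
  define a where "a = hd as"
  have "poly (char_poly Ac) a = 0"
    using len n unfolding cp a_def by (cases as) auto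
  then have "eigenvalue Ac a"
    using eigenvalue_root_char_poly[OF Ac] by simp
  then have "a = complex_of_real (Re a)"
    using complex_eigenvalue_of_sym_mat_real[OF A sym] unfolding Ac_def by (simp add: complex_eq_iff)
  then have "poly (char_poly Ac) (complex_of_real (Re a)) = 0"
    using \<open>poly (char_poly Ac) a = 0\<close> by argo
  moreover have "char_poly Ac = map_poly complex_of_real (char_poly A)"
    unfolding Ac_def by (rule of_real_hom.char_poly_hom[OF A])
  ultimately have "complex_of_real (poly (char_poly A) (Re a)) = 0"
    by (simp only: of_real_hom.poly_map_poly)
  then show ?thesis
    using eigenvalue_root_char_poly[OF A] by auto
qed

lemma orthonormal_mat_of_orthogonal_cols:
  fixes ws :: "real vec list"
  assumes ws: "set ws \<subseteq> carrier_vec n" and len: "length ws = n" and orth: "corthogonal ws"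
  defines "N \<equiv> mat_of_cols n (map (\<lambda>w. (1 / sqrt (w \<bullet> w)) \<cdot>\<^sub>v w) ws)"
  shows "N \<in> carrier_mat n n" and "transpose_mat N * N = 1\<^sub>m n"
    and "i < n \<Longrightarrow> col N i = (1 / sqrt (ws ! i \<bullet> ws ! i)) \<cdot>\<^sub>v ws ! i"
proof -
  have ws_carrier: "ws ! i \<in> carrier_vec n" if "i < n" for i
    using ws len that by auto
  have ws_orth: "ws ! i \<bullet> ws ! j = 0 \<longleftrightarrow> i \<noteq> j" if "i < n" "j < n" for i j
    using corthogonalD[OF orth, of i j] len that by simp
  show N: "N \<in> carrier_mat n n"
    unfolding N_def using len mat_of_cols_carrier(1) by (metis length_map)
  show col_N: "col N i = (1 / sqrt (ws ! i \<bullet> ws ! i)) \<cdot>\<^sub>v ws ! i" if "i < n" for i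
    unfolding N_def using that len ws_carrier by simp
  have "col N i \<bullet> col N j = (if i = j then 1 else 0)" if i: "i < n" and j: "j < n" for i j
  proof (cases "i = j")
    case True
    have "ws ! i \<bullet> ws ! i > 0"
      using ws_orth[OF i i] scalar_prod_self_nonneg[of "ws ! i"] by linarith
    then show ?thesis
      using True i ws_carrier[OF i]
      by (simp add: col_N smult_scalar_prod_distrib scalar_prod_smult_distrib[of _ n] field_simps)
  next
    case False
    then show ?thesis
      using i j ws_carrier[OF i] ws_carrier[OF j] ws_orth[OF i j]
      by (simp add: col_N smult_scalar_prod_distrib scalar_prod_smult_distrib[of _ n])
  qed
  then show "transpose_mat N * N = 1\<^sub>m n"
    using N by (intro eq_matI) auto
qed

lemma orthonormal_mat_with_first_col:
  fixes v :: "real vec"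
  assumes v: "v \<in> carrier_vec n" and v0: "v \<noteq> 0\<^sub>v n"
  shows "\<exists>N c. N \<in> carrier_mat n n \<and> transpose_mat N * N = 1\<^sub>m n \<and> col N 0 = c \<cdot>\<^sub>v v"
proof -
  interpret cof_vec_space n "TYPE(real)" .
  define b where "b = basis_completion v"
  from basis_completion[OF v v0, folded b_def]
  have dist_b: "distinct b" and indep: "\<not> lin_dep (set b)" and b: "set b \<subseteq> carrier_vec n"
    and hd_b: "hd b = v" and len_b: "length b = n"
    by auto
  have "n > 0"
    using v v0 by (metis carrier_vecD gr0I vec_of_dim_0)
  then obtain vs where bv: "b = v # vs"
    using hd_b len_b by (cases b) auto
  define ws where "ws = gram_schmidt n b"
  from gram_schmidt_result[OF b dist_b indep ws_def]
  have ws: "set ws \<subseteq> carrier_vec n" and orth: "corthogonal ws" and len_ws: "length ws = n"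
    using len_b by auto
  have "ws ! 0 = v"
    using gram_schmidt_hd[OF v, of vs] len_ws \<open>n > 0\<close> unfolding ws_def bv
    by (metis hd_conv_nth list.size(3) less_not_refl2 bv ws_def)
  then show ?thesis
    using orthonormal_mat_of_orthogonal_cols[OF ws len_ws orth] \<open>n > 0\<close> by blast
qed

lemma sym_mat_deflation:
  fixes A :: "real mat"
  assumes A: "A \<in> carrier_mat (Suc k) (Suc k)" and sym: "sym_mat A"
  obtains N e B where "N \<in> carrier_mat (Suc k) (Suc k)" "transpose_mat N * N = 1\<^sub>m (Suc k)"
    and "B \<in> carrier_mat k k" "sym_mat B"
    and "transpose_mat N * A * N = four_block_mat (mat 1 1 (\<lambda>_. e)) (0\<^sub>m 1 k) (0\<^sub>m k 1) B"
proof -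
  let ?n = "Suc k"
  obtain e where "eigenvalue A e"
    using sym_mat_has_eigenvalue[OF A _ sym] by auto
  then obtain v where v: "v \<in> carrier_vec ?n" "v \<noteq> 0\<^sub>v ?n" and Av: "A *\<^sub>v v = e \<cdot>\<^sub>v v"
    using A unfolding eigenvalue_def eigenvector_def by auto
  obtain N c where N: "N \<in> carrier_mat ?n ?n" and NtN: "transpose_mat N * N = 1\<^sub>m ?n"
    and col0: "col N 0 = c \<cdot>\<^sub>v v"
    using orthonormal_mat_with_first_col[OF v] by blast
  have A_col0: "A *\<^sub>v col N 0 = e \<cdot>\<^sub>v col N 0"
    unfolding col0 using A v Av by (metis mult_mat_vec smult_smult_assoc mult.commute)
  define A' where "A' = transpose_mat N * A * N"
  have A': "A' \<in> carrier_mat ?n ?n"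
    unfolding A'_def using A N by auto
  have sym': "sym_mat A'"
    using sym_mat_congruence[of "transpose_mat N" ?n ?n A] A N sym unfolding A'_def by simp
  have A'_col0: "A' $$ (i, 0) = (if i = 0 then e else 0)" if i: "i < ?n" for i
  proof -
    have "A' $$ (i, 0) = col N i \<bullet> (A *\<^sub>v col N 0)"
      unfolding A'_def using A N i by (simp add: assoc_mult_mat[of _ ?n ?n _ ?n _ ?n] col_mult2)
    also have "\<dots> = e * (col N i \<bullet> col N 0)"
      unfolding A_col0 using N i by (simp add: scalar_prod_smult_distrib[of _ ?n])
    also have "col N i \<bullet> col N 0 = (1\<^sub>m ?n) $$ (i, 0)"
      unfolding NtN[symmetric] using N i by simp
    finally show ?thesis
      using i by simp
  qed
  have A'_sym: "A' $$ (i, j) = A' $$ (j, i)" if "i < ?n" "j < ?n" for i j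
    using sym' A' that unfolding sym_mat_def by (metis carrier_matD index_transpose_mat(1))
  define B where "B = mat k k (\<lambda>(i, j). A' $$ (Suc i, Suc j))"
  have "B \<in> carrier_mat k k" "sym_mat B"
    unfolding B_def sym_mat_def using A'_sym by (auto intro!: eq_matI)
  moreover have "A' = four_block_mat (mat 1 1 (\<lambda>_. e)) (0\<^sub>m 1 k) (0\<^sub>m k 1) B"
    using A' A'_col0 A'_sym[of 0] by (intro eq_matI) (auto simp: B_def)
  ultimately show ?thesis
    using that N NtN unfolding A'_def by blast
qed

lemma one_block_orthogonal_congruence:
  fixes U :: "real mat"
  assumes U: "U \<in> carrier_mat k k" and UtU: "transpose_mat U * U = 1\<^sub>m k"
  defines "V \<equiv> four_block_mat (1\<^sub>m 1) (0\<^sub>m 1 k) (0\<^sub>m k 1) U"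
  shows "V \<in> carrier_mat (Suc k) (Suc k)" and "transpose_mat V * V = 1\<^sub>m (Suc k)"
    and "V * mat_diag (Suc k) (\<lambda>i. if i = 0 then e else d (i - 1)) * transpose_mat V
      = four_block_mat (mat 1 1 (\<lambda>_. e)) (0\<^sub>m 1 k) (0\<^sub>m k 1) (U * mat_diag k d * transpose_mat U)"
proof -
  show V: "V \<in> carrier_mat (Suc k) (Suc k)"
    unfolding V_def using U by (metis four_block_carrier_mat one_carrier_mat plus_1_eq_Suc)
  have Vt: "transpose_mat V = four_block_mat (1\<^sub>m 1) (0\<^sub>m 1 k) (0\<^sub>m k 1) (transpose_mat U)"
    unfolding V_def using U by (subst transpose_four_block_mat) auto
  show "transpose_mat V * V = 1\<^sub>m (Suc k)"
    unfolding Vt unfolding V_def using U UtU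
    by (subst mult_four_block_mat[of _ 1 1 _ k _ k _ _ 1 _ k]) auto
  have diag: "mat_diag (Suc k) (\<lambda>i. if i = 0 then e else d (i - 1))
      = four_block_mat (mat 1 1 (\<lambda>_. e)) (0\<^sub>m 1 k) (0\<^sub>m k 1) (mat_diag k d)"
    by (intro eq_matI) (auto simp: mat_diag_def)
  have UD: "U * mat_diag k d \<in> carrier_mat k k"
    using U by simp
  then have UDUt: "U * mat_diag k d * transpose_mat U \<in> carrier_mat k k"
    using U by (intro mult_carrier_mat[OF UD]) simp
  have VD: "V * mat_diag (Suc k) (\<lambda>i. if i = 0 then e else d (i - 1))
      = four_block_mat (mat 1 1 (\<lambda>_. e)) (0\<^sub>m 1 k) (0\<^sub>m k 1) (U * mat_diag k d)"
    unfolding V_def diag using U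
    by (subst mult_four_block_mat[of _ 1 1 _ k _ k _ _ 1 _ k])
      (auto simp: left_mult_zero_mat[OF mat_diag_dim])
  show "V * mat_diag (Suc k) (\<lambda>i. if i = 0 then e else d (i - 1)) * transpose_mat V
      = four_block_mat (mat 1 1 (\<lambda>_. e)) (0\<^sub>m 1 k) (0\<^sub>m k 1) (U * mat_diag k d * transpose_mat U)"
    unfolding VD Vt using U UDUt
    by (subst mult_four_block_mat[of _ 1 1 _ k _ k _ _ 1 _ k])
      (auto simp: right_mult_zero_mat[OF UD] left_add_zero_mat)
qed

lemma sym_mat_orthogonal_diagonalization:
  fixes A :: "real mat"
  assumes "A \<in> carrier_mat n n" and "sym_mat A"
  shows "\<exists>U d. U \<in> carrier_mat n n \<and> transpose_mat U * U = 1\<^sub>m n \<and> A = U * mat_diag n d * transpose_mat U"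
  using assms
proof (induction n arbitrary: A)
  case 0
  then show ?case
    by (intro exI[of _ "1\<^sub>m 0"]) (auto intro!: eq_matI)
next
  case (Suc k A)
  let ?n = "Suc k"
  obtain N e B where N: "N \<in> carrier_mat ?n ?n" and NtN: "transpose_mat N * N = 1\<^sub>m ?n"
    and B: "B \<in> carrier_mat k k" "sym_mat B"
    and deflate: "transpose_mat N * A * N = four_block_mat (mat 1 1 (\<lambda>_. e)) (0\<^sub>m 1 k) (0\<^sub>m k 1) B"
    using sym_mat_deflation[OF Suc.prems] by blast
  obtain U\<^sub>B d\<^sub>B where UB: "U\<^sub>B \<in> carrier_mat k k" "transpose_mat U\<^sub>B * U\<^sub>B = 1\<^sub>m k"
    and B_eq: "B = U\<^sub>B * mat_diag k d\<^sub>B * transpose_mat U\<^sub>B"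
    using Suc.IH[OF B] by blast
  define V where "V = four_block_mat (1\<^sub>m 1) (0\<^sub>m 1 k) (0\<^sub>m k 1) U\<^sub>B"
  define d where "d i = (if i = 0 then e else d\<^sub>B (i - 1))" for i
  have V: "V \<in> carrier_mat ?n ?n" and VtV: "transpose_mat V * V = 1\<^sub>m ?n"
    using one_block_orthogonal_congruence(1,2)[OF UB] unfolding V_def by auto
  have VDV: "V * mat_diag ?n d * transpose_mat V = transpose_mat N * A * N"
    using one_block_orthogonal_congruence(3)[OF UB, of e d\<^sub>B] unfolding deflate B_eq V_def d_def .
  have "N * transpose_mat N = 1\<^sub>m ?n"
    using mat_mult_left_right_inverse[OF _ N NtN] N by auto
  then have "A = N * (transpose_mat N * A * N) * transpose_mat N"
    using orthogonal_conjugate_cancel[of "transpose_mat N" ?n A] N Suc.prems(1) by simp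
  also have "\<dots> = N * V * mat_diag ?n d * transpose_mat (N * V)"
    unfolding VDV[symmetric] using N V by (intro congruence_mult_assoc) auto
  finally have "A = N * V * mat_diag ?n d * transpose_mat (N * V)" .
  moreover have "N * V \<in> carrier_mat ?n ?n"
    using N V by simp
  ultimately show ?case
    using orthogonal_mat_mult[OF N V NtN VtV] by blast
qed

section \<open>Inverse square roots of positive definite matrices\<close>

lemma dim_mat_diag [simp]: "dim_row (mat_diag n d) = n" "dim_col (mat_diag n d) = n"
  by (simp_all add: mat_diag_def)

lemma sym_mat_diag: "sym_mat (mat_diag n d)"
  unfolding sym_mat_def mat_diag_def by (intro eq_matI) auto

lemma index_mat_diag_mult_vec:
  fixes x :: "real vec"
  assumes x: "x \<in> carrier_vec n" and i: "i < n"
  shows "(mat_diag n d *\<^sub>v x) $ i = d i * x $ i"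
proof -
  have "(mat_diag n d *\<^sub>v x) $ i = (\<Sum>j<n. (if i = j then d j else 0) * x $ j)"
    using x i by (simp add: mat_diag_def scalar_prod_def atLeast0LessThan)
  also have "\<dots> = (\<Sum>j<n. if j = i then d i * x $ i else 0)"
    by (rule sum.cong) auto
  finally show ?thesis
    using i by simp
qed

lemma quadratic_form_mat_diag:
  fixes x :: "real vec"
  assumes x: "x \<in> carrier_vec n"
  shows "x \<bullet> (mat_diag n d *\<^sub>v x) = (\<Sum>j<n. d j * (x $ j)\<^sup>2)"
proof -
  have "x \<bullet> (mat_diag n d *\<^sub>v x) = (\<Sum>j<n. x $ j * (mat_diag n d *\<^sub>v x) $ j)"
    by (simp only: scalar_prod_def dim_mult_mat_vec dim_mat_diag atLeast0LessThan)
  also have "\<dots> = (\<Sum>j<n. d j * (x $ j)\<^sup>2)"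
    using x by (intro sum.cong) (auto simp: index_mat_diag_mult_vec power2_eq_square
        simp del: index_mult_mat_vec)
  finally show ?thesis .
qed

lemma posdef_mat_diag:
  assumes pos: "\<And>i. i < n \<Longrightarrow> d i > 0"
  shows "posdef_mat (mat_diag n d)"
  unfolding posdef_mat_def
proof (intro ballI impI)
  fix x :: "real vec"
  assume "x \<in> carrier_vec (dim_col (mat_diag n d))" and "x \<noteq> 0\<^sub>v (dim_col (mat_diag n d))"
  then have x: "x \<in> carrier_vec n" and x0: "x \<noteq> 0\<^sub>v n"
    by (auto simp: mat_diag_def)
  obtain i where i: "i < n" "x $ i \<noteq> 0"
    using x x0 by (metis carrier_vecD eq_vecI index_zero_vec(1,2))
  have "x \<bullet> (mat_diag n d *\<^sub>v x) = (\<Sum>j<n. d j * (x $ j)\<^sup>2)"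
    using x by (rule quadratic_form_mat_diag)
  also have "\<dots> > 0"
  proof (rule sum_pos2[of _ i])
    show "0 \<le> d j * (x $ j)\<^sup>2" if "j \<in> {..<n}" for j
      using pos[of j] that by simp
  qed (use i pos in auto)
  finally show "x \<bullet> (mat_diag n d *\<^sub>v x) > 0" .
qed

lemma posdef_mat_diag_pos:
  assumes pd: "posdef_mat (mat_diag n d)" and i: "i < n"
  shows "d i > 0"
proof -
  have "unit_vec n i \<bullet> (mat_diag n d *\<^sub>v unit_vec n i) > 0"
    using pd i unfolding posdef_mat_def by (auto simp: mat_diag_def)
  also have "unit_vec n i \<bullet> (mat_diag n d *\<^sub>v unit_vec n i) = (\<Sum>j<n. if j = i then d i else 0)"
    unfolding quadratic_form_mat_diag[OF unit_vec_carrier] by (intro sum.cong) (auto simp: unit_vec_def)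
  also have "\<dots> = d i"
    using i by simp
  finally show ?thesis .
qed

lemma sym_posdef_inv_sqrt_exists:
  fixes G :: "real mat"
  assumes G: "G \<in> carrier_mat n n" and sym: "sym_mat G" and pd: "posdef_mat G"
  shows "\<exists>S. S \<in> carrier_mat n n \<and> sym_mat S \<and> posdef_mat S \<and> S * S * G = 1\<^sub>m n"
proof -
  obtain U d where U: "U \<in> carrier_mat n n" and UtU: "transpose_mat U * U = 1\<^sub>m n"
    and G_eq: "G = U * mat_diag n d * transpose_mat U"
    using sym_mat_orthogonal_diagonalization[OF G sym] by blast
  have Ut: "transpose_mat U \<in> carrier_mat n n"
    using U by simp
  have UUt: "U * transpose_mat U = 1\<^sub>m n"
    using mat_mult_left_right_inverse[OF Ut U UtU] .
  have "transpose_mat U * G * transpose_mat (transpose_mat U) = mat_diag n d"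
    unfolding G_eq using orthogonal_conjugate_cancel[OF U UtU mat_diag_dim] by simp
  then have "posdef_mat (mat_diag n d)"
    using posdef_mat_congruence[OF Ut _ G pd] UtU by simp
  then have d_pos: "d i > 0" if "i < n" for i
    using posdef_mat_diag_pos that by blast
  define r where "r i = 1 / sqrt (d i)" for i
  define S where "S = U * mat_diag n r * transpose_mat U"
  have "r i * r i * d i = 1" if "i < n" for i
    using d_pos[OF that] unfolding r_def by (simp add: field_simps)
  then have "mat_diag n (\<lambda>i. r i * r i * d i) = 1\<^sub>m n"
    by (intro eq_matI) (auto simp: mat_diag_def)
  then have "mat_diag n r * mat_diag n r * mat_diag n d = 1\<^sub>m n"
    by simp
  then have "S * S * G = 1\<^sub>m n"
    unfolding S_def G_eq using U UtU UUt by (simp add: mult_orthogonal_conjugates)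
  moreover have "sym_mat S"
    unfolding S_def using U by (intro sym_mat_congruence sym_mat_diag) auto
  moreover have "posdef_mat S"
    unfolding S_def using U UUt d_pos
    by (intro posdef_mat_congruence posdef_mat_diag) (auto simp: r_def)
  moreover have "S \<in> carrier_mat n n"
    unfolding S_def using U by (intro mult_carrier_mat[of _ n n]) auto
  ultimately show ?thesis
    by blast
qed

lemma posdef_mat_quadratic_form:
  fixes P :: "real mat"
  assumes P: "P \<in> carrier_mat n n" and pd: "posdef_mat P" and x: "x \<in> carrier_vec n"
  shows "x \<bullet> (P *\<^sub>v x) \<ge> 0" and "x \<bullet> (P *\<^sub>v x) = 0 \<longleftrightarrow> x = 0\<^sub>v n"
  using pd P x unfolding posdef_mat_def by (cases "x = 0\<^sub>v n"; force)+

lemma sum_diag_mult_commute: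
  fixes A B :: "real mat"
  assumes A: "A \<in> carrier_mat n n" and B: "B \<in> carrier_mat n n"
  shows "(\<Sum>i<n. (A * B) $$ (i, i)) = (\<Sum>i<n. (B * A) $$ (i, i))"
proof -
  have "(\<Sum>i<n. (A * B) $$ (i, i)) = (\<Sum>i<n. \<Sum>k<n. A $$ (i, k) * B $$ (k, i))"
    using A B by (simp add: scalar_prod_def atLeast0LessThan)
  also have "\<dots> = (\<Sum>k<n. \<Sum>i<n. B $$ (k, i) * A $$ (i, k))"
    by (subst sum.swap) (simp add: mult.commute)
  also have "\<dots> = (\<Sum>i<n. (B * A) $$ (i, i))"
    using A B by (simp add: scalar_prod_def atLeast0LessThan)
  finally show ?thesis .
qed

lemma diag_sym_congruence:
  fixes E P :: "real mat"
  assumes E: "E \<in> carrier_mat n n" and P: "P \<in> carrier_mat n n" and sym: "sym_mat E" and i: "i < n"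
  shows "(E * (P * E)) $$ (i, i) = col E i \<bullet> (P *\<^sub>v col E i)"
proof -
  have "row E i = col E i"
    using col_transpose[of i E] sym E i unfolding sym_mat_def by simp
  then show ?thesis
    using E P i by simp
qed

lemma diag_sym_congruence_nonneg:
  fixes E P :: "real mat"
  assumes E: "E \<in> carrier_mat n n" and sym: "sym_mat E"
    and P: "P \<in> carrier_mat n n" and pd: "posdef_mat P" and i: "i < n"
  shows "(E * (P * E)) $$ (i, i) \<ge> 0"
  using posdef_mat_quadratic_form(1)[OF P pd, of "col E i"] diag_sym_congruence[OF E P sym i] E
  by auto

lemma sym_mat_eq_0_of_trace_congruence:
  fixes E P :: "real mat"
  assumes E: "E \<in> carrier_mat n n" and sym: "sym_mat E"
    and P: "P \<in> carrier_mat n n" and pd: "posdef_mat P"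
    and trace: "(\<Sum>i<n. (E * (P * E)) $$ (i, i)) \<le> 0"
  shows "E = 0\<^sub>m n n"
proof -
  have nonneg: "\<forall>i\<in>{..<n}. (E * (P * E)) $$ (i, i) \<ge> 0"
    using diag_sym_congruence_nonneg[OF E sym P pd] by simp
  then have "(\<Sum>i<n. (E * (P * E)) $$ (i, i)) \<ge> 0"
    by (intro sum_nonneg) auto
  then have "(\<Sum>i<n. (E * (P * E)) $$ (i, i)) = 0"
    using trace by linarith
  then have "(E * (P * E)) $$ (i, i) = 0" if "i < n" for i
    using sum_nonneg_eq_0_iff[of "{..<n}" "\<lambda>i. (E * (P * E)) $$ (i, i)"] nonneg that by auto
  then have "col E i = 0\<^sub>v n" if "i < n" for i
    using posdef_mat_quadratic_form(2)[OF P pd, of "col E i"] diag_sym_congruence[OF E P sym] E that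
    by auto
  then show ?thesis
    using E by (intro eq_matI) (auto, metis carrier_matD col_def index_vec index_zero_vec(1))
qed

lemma sym_posdef_sqrt_unique:
  fixes S T :: "real mat"
  assumes S: "S \<in> carrier_mat n n" "sym_mat S" "posdef_mat S"
    and T: "T \<in> carrier_mat n n" "sym_mat T" "posdef_mat T"
    and sq: "S * S = T * T"
  shows "S = T"
proof -
  define E where "E = S - T"
  have E: "E \<in> carrier_mat n n"
    unfolding E_def by (rule minus_carrier_mat[OF T(1)])
  have sym: "sym_mat E"
    using S T unfolding E_def sym_mat_def by (intro eq_matI) (auto, metis carrier_matD index_transpose_mat(1))
  have SE_ET: "S * E + E * T = 0\<^sub>m n n"
  proof -
    have "S * E = S * S - S * T" and "E * T = S * T - T * T"
      unfolding E_def using S T by (simp_all add: mult_minus_distrib_mat[of _ n n] minus_mult_distrib_mat[of _ n n])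
    then show ?thesis
      unfolding sq using S T by (intro eq_matI) auto
  qed
  have "(\<Sum>i<n. (E * (T * E)) $$ (i, i)) = (\<Sum>i<n. (E * (E * T)) $$ (i, i))"
    using sum_diag_mult_commute[OF mult_carrier_mat[OF E T(1)] E]
    by (simp only: assoc_mult_mat[OF E T(1) E])
  then have "(\<Sum>i<n. (E * (S * E)) $$ (i, i)) + (\<Sum>i<n. (E * (T * E)) $$ (i, i))
      = (\<Sum>i<n. (E * (S * E)) $$ (i, i) + (E * (E * T)) $$ (i, i))"
    by (simp only: sum.distrib)
  also have "\<dots> = (\<Sum>i<n. (E * (S * E + E * T)) $$ (i, i))"
    using E S T by (intro sum.cong refl)
      (simp add: mult_add_distrib_mat[OF E mult_carrier_mat[OF S(1) E] mult_carrier_mat[OF E T(1)]]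
        del: index_mult_mat(1))
  also have "\<dots> = 0"
    unfolding SE_ET using E by simp
  finally have "(\<Sum>i<n. (E * (S * E)) $$ (i, i)) + (\<Sum>i<n. (E * (T * E)) $$ (i, i)) = 0" .
  moreover have "(\<Sum>i<n. (E * (T * E)) $$ (i, i)) \<ge> 0"
    using diag_sym_congruence_nonneg[OF E sym T(1) T(3)] by (intro sum_nonneg) auto
  ultimately have "(\<Sum>i<n. (E * (S * E)) $$ (i, i)) \<le> 0"
    by linarith
  then have E0: "E = 0\<^sub>m n n"
    by (rule sym_mat_eq_0_of_trace_congruence[OF E sym S(1) S(3)])
  have "S $$ (i, j) = T $$ (i, j)" if "i < n" "j < n" for i j
    using arg_cong[OF E0, of "\<lambda>M. M $$ (i, j)"] S T that unfolding E_def by simp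
  then show ?thesis
    using S T by (intro eq_matI) auto
qed

lemma mat_inv_sqrt_spec:
  fixes G :: "real mat"
  assumes G: "G \<in> carrier_mat n n" and sym: "sym_mat G" and pd: "posdef_mat G"
  shows "mat_inv_sqrt G \<in> carrier_mat n n \<and> sym_mat (mat_inv_sqrt G) \<and> posdef_mat (mat_inv_sqrt G)
    \<and> mat_inv_sqrt G * mat_inv_sqrt G * G = 1\<^sub>m n"
proof -
  let ?P = "\<lambda>S. S \<in> carrier_mat n n \<and> sym_mat S \<and> posdef_mat S \<and> S * S * G = 1\<^sub>m n"
  have "S = T" if "?P S" "?P T" for S T
  proof (rule sym_posdef_sqrt_unique)
    have SS: "S * S \<in> carrier_mat n n" and TT: "T * T \<in> carrier_mat n n"
      using that by auto
    have "G * (T * T) = 1\<^sub>m n"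
      using mat_mult_left_right_inverse[OF TT G] that(2) by blast
    then have "S * S = (S * S * G) * (T * T)"
      using SS TT G by (simp add: assoc_mult_mat[of _ n n _ n _ n] right_mult_one_mat[OF SS])
    also have "\<dots> = T * T"
      using that(1) left_mult_one_mat[OF TT] by (simp only:)
    finally show "S * S = T * T" .
  qed (use that in auto)
  then have "\<exists>!S. ?P S"
    using sym_posdef_inv_sqrt_exists[OF G sym pd] by blast
  then have "?P (THE S. ?P S)"
    by (rule theI')
  moreover have "mat_inv_sqrt G = (THE S. ?P S)"
    by (simp only: mat_inv_sqrt_def carrier_matD(1)[OF G])
  ultimately show ?thesis
    by simp
qed

section \<open>Covariance matrices\<close>

lemma coef_mat_sym:
  fixes \<psi> :: "nat \<Rightarrow> 'h::real_inner"
  assumes "\<And>x y. inner (T x) y = inner x (T y)"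
  shows "sym_mat (coef_mat \<psi> m T)"
  unfolding sym_mat_def coef_mat_def using assms by (intro eq_matI) (auto simp: inner_commute)

lemma coef_mat_posdef:
  fixes \<psi> :: "nat \<Rightarrow> 'h::real_inner" and T :: "'h \<Rightarrow> 'h"
  assumes orth: "\<And>i j. i \<ge> 1 \<Longrightarrow> j \<ge> 1 \<Longrightarrow> inner (\<psi> i) (\<psi> j) = (if i = j then 1 else 0)"
    and lin: "linear T" and pos: "\<And>h. h \<noteq> 0 \<Longrightarrow> inner h (T h) > 0"
  shows "posdef_mat (coef_mat \<psi> m T)"
  unfolding posdef_mat_def
proof (intro ballI impI)
  fix x :: "real vec"
  assume "x \<in> carrier_vec (dim_col (coef_mat \<psi> m T))" and "x \<noteq> 0\<^sub>v (dim_col (coef_mat \<psi> m T))"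
  then have x: "x \<in> carrier_vec m" and x0: "x \<noteq> 0\<^sub>v m"
    by (auto simp: coef_mat_def)
  define h where "h = (\<Sum>j<m. x $ j *\<^sub>R \<psi> (Suc j))"
  have "inner h (T h) = (\<Sum>j<m. \<Sum>k<m. x $ j * (x $ k * inner (\<psi> (Suc k)) (T (\<psi> (Suc j)))))"
    unfolding h_def using lin by (simp add: linear_sum linear_scale inner_sum_left inner_sum_right sum_distrib_left)
  also have "\<dots> = (\<Sum>k<m. \<Sum>j<m. x $ j * (x $ k * inner (\<psi> (Suc k)) (T (\<psi> (Suc j)))))"
    by (rule sum.swap)
  also have "\<dots> = x \<bullet> (coef_mat \<psi> m T *\<^sub>v x)"
    using x by (simp add: scalar_prod_def atLeast0LessThan coef_mat_def sum_distrib_left mult_ac)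
  finally have form: "inner h (T h) = x \<bullet> (coef_mat \<psi> m T *\<^sub>v x)" .
  obtain i where i: "i < m" "x $ i \<noteq> 0"
    using x x0 by (metis carrier_vecD eq_vecI index_zero_vec(1,2))
  have "inner h (\<psi> (Suc i)) = (\<Sum>j<m. x $ j * (if Suc j = Suc i then 1 else 0))"
    unfolding h_def by (simp add: inner_sum_left orth)
  also have "\<dots> = x $ i"
    using i by (simp add: if_distrib cong: if_cong)
  finally have "h \<noteq> 0"
    using i by auto
  then show "x \<bullet> (coef_mat \<psi> m T *\<^sub>v x) > 0"
    using pos form by metis
qed

lemma spec_norm_inv_le_of_whitened:
  fixes G H S :: "real mat"
  assumes G: "G \<in> carrier_mat n n" and H: "H \<in> carrier_mat n n" and S: "S \<in> carrier_mat n n"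
    and sym: "sym_mat S" and SSG: "S * S * G = 1\<^sub>m n"
    and close: "spec_norm (S * H * S - 1\<^sub>m n) \<le> \<delta>" and "\<delta> < 1"
  shows "invertible_mat H \<and> spec_norm (mat_inv H) \<le> spec_norm (mat_inv G) / (1 - \<delta>)"
proof -
  have SHS: "S * H * S \<in> carrier_mat n n"
    using S H by simp
  obtain invertible: "invertible_mat (S * H * S)"
    and inv_le: "spec_norm (mat_inv (S * H * S)) \<le> 1 / (1 - \<delta>)"
    using invertible_mat_near_one[OF SHS close \<open>\<delta> < 1\<close>] by blast
  define N where "N = mat_inv (S * H * S)"
  have N: "N \<in> carrier_mat n n" and SHSN: "S * H * S * N = 1\<^sub>m n"
    using mat_inv_right_inverse[OF SHS invertible] unfolding N_def by auto
  have "S * (S * G) = 1\<^sub>m n"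
    using SSG S G by (simp add: assoc_mult_mat[of _ n n _ n _ n])
  then have H_SNS: "H * (S * N * S) = 1\<^sub>m n"
    using S G H N SHSN by (intro right_inverse_of_congruence[of _ n "S * G"]) auto
  have SNS: "S * N * S \<in> carrier_mat n n"
    using S N by simp
  have "mat_inv G = S * S"
    using mat_mult_left_right_inverse[OF _ G SSG] S by (intro mat_inv_eqI[OF G]) auto
  then have "spec_norm (S * N * S) \<le> spec_norm (mat_inv G) * (1 / (1 - \<delta>))"
    using spec_norm_sym_congruence_le[OF S sym N] inv_le spec_norm_nonneg[of "S * S"] unfolding N_def
    by (metis mult_left_mono order.trans)
  then show ?thesis
    using invertible_mat_of_right_inverse[OF H SNS H_SNS] mat_inv_eqI[OF H SNS H_SNS] by simp
qed

theorem lemmaB5: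
  fixes \<psi> :: "nat \<Rightarrow> 'h::{real_inner, complete_space}"
    and \<Gamma> :: "'h \<Rightarrow> 'h"
    and X :: "nat \<Rightarrow> 'h"
    and m n :: nat
  assumes onb_orth: "\<And>i j. i \<ge> 1 \<Longrightarrow> j \<ge> 1 \<Longrightarrow> inner (\<psi> i) (\<psi> j) = (if i = j then 1 else 0)"
    and onb_complete: "closure (span (\<psi> ` {1..})) = UNIV"
    and Gamma_lin: "bounded_linear \<Gamma>"
    and Gamma_sa: "\<And>x y. inner (\<Gamma> x) y = inner x (\<Gamma> y)"
    and Gamma_pos: "\<And>h. h \<noteq> 0 \<Longrightarrow> inner h (\<Gamma> h) > 0"
    and m1: "m \<ge> 1" and n1: "n \<ge> 1"
    and n_large: "real n \<ge> 8 / 7 * spec_norm (mat_inv (coef_mat \<psi> m \<Gamma>))"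
    and event: "8 * sqrt (real m) * spec_norm (Xi_mat \<psi> m \<Gamma> n X) \<le> 1"
  shows "invertible_mat (emp_cov \<psi> m n X)
         \<and> spec_norm (mat_inv (emp_cov \<psi> m n X)) \<le> real n"
proof -
  let ?G = "coef_mat \<psi> m \<Gamma>"
  let ?H = "emp_cov \<psi> m n X"
  have G: "?G \<in> carrier_mat m m" and H: "?H \<in> carrier_mat m m"
    by (simp_all add: coef_mat_def emp_cov_def)
  have "sym_mat ?G"
    using Gamma_sa by (rule coef_mat_sym)
  moreover have "posdef_mat ?G"
    using onb_orth bounded_linear.linear[OF Gamma_lin] Gamma_pos by (rule coef_mat_posdef)
  ultimately have S: "mat_inv_sqrt ?G \<in> carrier_mat m m" "sym_mat (mat_inv_sqrt ?G)"
    and SSG: "mat_inv_sqrt ?G * mat_inv_sqrt ?G * ?G = 1\<^sub>m m"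
    using mat_inv_sqrt_spec[OF G] by auto
  have "8 * spec_norm (Xi_mat \<psi> m \<Gamma> n X) \<le> 8 * sqrt (real m) * spec_norm (Xi_mat \<psi> m \<Gamma> n X)"
    using m1 spec_norm_nonneg by (intro mult_right_mono) auto
  then have "spec_norm (mat_inv_sqrt ?G * ?H * mat_inv_sqrt ?G - 1\<^sub>m m) \<le> 1 / 8"
    using event unfolding Xi_mat_def by linarith
  then have "invertible_mat ?H \<and> spec_norm (mat_inv ?H) \<le> spec_norm (mat_inv ?G) / (1 - 1 / 8)"
    by (intro spec_norm_inv_le_of_whitened[OF G H S SSG]) auto
  then show ?thesis
    using n_large by simp
qed

end
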